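(* Let ${\mathbf B}_1$ and ${\mathbf B}_2$ be two real symmetric $3\times3$ matrices. If ${\mathbf B}_1+t{\mathbf B}_2$ has a multiple eigenvalue for every real number $t$, then ${\mathbf B}_1$ and ${\mathbf B}_2$ can be diagonalized by the same orthogonal matrix. *)

theory Defs
  imports "HOL-Analysis.Analysis" "HOL-Computational_Algebra.Polynomial"
begin

definition charpoly :: "real^'n^'n \<Rightarrow> real poly" where
  "charpoly A = det (\<chi> i j. (if i = j then [:0, 1:] else 0) - [:A $ i $ j:])"

definition has_multiple_eigenvalue :: "real^'n^'n \<Rightarrow> bool" where
  "has_multiple_eigenvalue A \<longleftrightarrow> (\<exists>c::real. [:- c, 1:] ^ 2 dvd charpoly A)"

definition diagonal_matrix :: "real^'n^'n \<Rightarrow> bool" where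
  "diagonal_matrix A \<longleftrightarrow> (\<forall>i j. i \<noteq> j \<longrightarrow> A $ i $ j = 0)"

definition symmetric_matrix :: "real^'n^'n \<Rightarrow> bool" where
  "symmetric_matrix A \<longleftrightarrow> transpose A = A"

end

(*
  At a double root c of the characteristic polynomial of a symmetric 3x3 matrix X,
  both det (X - c I) and the sum of the principal 2x2 minors of X - c I vanish; by a
  sum-of-squares identity this forces every 2x2 minor of X - c I to vanish, so
  X = c I + mu v v^T with |v| = 1.  Such an X is diagonalised, together with I, by any orthogonal
  Q with Q e1 = v, which settles the case where B1 and B2 lie in the span of I and one matrix X
  of the pencil.

  Otherwise I, B1, B2 are linearly independent.  Each X = B1 + t B2 satisfies
  X^2 = a(t) X + b(t) I, and comparing four values of t shows that the shifts U = B1 - z/2 I and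
  W = B2 - c/2 I satisfy U^2, W^2, UW + WU in R I.  Then V = W - k U anticommutes with U for a
  suitable k; in odd dimension det (UV) = det (-VU) = - det U det V, so if U^2 is a nonzero
  scalar then det V = 0, V^2 = 0 and, V being symmetric, V = 0.  Either U = 0 or W is a multiple
  of U, and B1 or B2 falls back into the first case.
*)
theory Submission
  imports Defs
begin

lemma matrix_add_rdistrib: "((A::real^'n^'m) + B) ** C = A ** C + B ** C"
  by (vector matrix_matrix_mult_def sum.distrib[symmetric] field_simps)

lemma matrix_diff_ldistrib: "(A::real^'n^'m) ** (B - C) = A ** B - A ** C"
  by (vector matrix_matrix_mult_def sum_subtractf[symmetric] field_simps)

lemma matrix_diff_rdistrib: "((A::real^'n^'m) - B) ** C = A ** C - B ** C"
  by (vector matrix_matrix_mult_def sum_subtractf[symmetric] field_simps)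

lemma matrix_scaleR_left: "(k *\<^sub>R A :: real^'n^'m) ** B = k *\<^sub>R (A ** B)"
  by (simp add: scalar_matrix_assoc)

lemma matrix_scaleR_right: "(A :: real^'n^'m) ** (k *\<^sub>R B) = k *\<^sub>R (A ** B)"
  by (simp add: matrix_scalar_ac scalar_matrix_assoc)

lemmas matrix_mult_linear_simps = matrix_add_ldistrib matrix_add_rdistrib matrix_diff_ldistrib
  matrix_diff_rdistrib matrix_scaleR_left matrix_scaleR_right

lemma transpose_add: "transpose (A + B) = transpose A + transpose B"
  by (simp add: transpose_def vec_eq_iff)

lemma transpose_diff: "transpose (A - B) = transpose A - transpose B"
  by (simp add: transpose_def vec_eq_iff)

lemma symmetric_matrix_component_swap:
  assumes "transpose A = A"
  shows "A $ j $ i = A $ i $ j"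
  using arg_cong[OF assms, of "\<lambda>M. M $ i $ j"] by (simp add: transpose_def)

lemma det_scaleR_matrix: "det (k *\<^sub>R A :: real^'n^'n) = k ^ CARD('n) * det A"
proof -
  have "k *\<^sub>R A = mat k ** A"
    by (simp add: vec_eq_iff matrix_matrix_mult_def mat_def if_distrib if_distribR sum.delta' cong: if_cong)
  moreover have "det (mat k :: real^'n^'n) = k ^ CARD('n)"
    by (metis det_matrix_scaleR matrix_scaleR)
  ultimately show ?thesis by (simp add: det_mul)
qed

lemma symmetric_square_eq_0_imp_eq_0:
  fixes U :: "real^'n^'n"
  assumes "transpose U = U" and "U ** U = 0"
  shows "U = 0"
proof -
  have "(\<Sum>k\<in>UNIV. (U $ i $ k)\<^sup>2) = 0" for i
  proof -
    have "(U ** U) $ i $ i = 0" using assms(2) by simp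
    then show ?thesis
      by (simp add: matrix_matrix_mult_def power2_eq_square symmetric_matrix_component_swap[OF assms(1)])
  qed
  then show ?thesis by (simp add: sum_nonneg_eq_0_iff vec_eq_iff)
qed

lemma odd_dim_anticommuting_scalar_squares:
  fixes U V :: "real^'n^'n"
  assumes "odd CARD('n)"
    and "U ** U = u *\<^sub>R mat 1" and "u \<noteq> 0"
    and "V ** V = v *\<^sub>R mat 1" and "U ** V = - (V ** U)"
  shows "v = 0"
proof -
  have "det U * det V = det (- (V ** U))"
    using assms(5) by (metis det_mul)
  also have "\<dots> = - (det U * det V)"
    using assms(1) det_scaleR_matrix[of "-1" "V ** U"] by (simp add: det_mul)
  finally have "det U * det V = 0" by simp
  moreover have "(det U)\<^sup>2 \<noteq> 0"
    using assms(2,3) det_scaleR_matrix[of u "mat 1 :: real^'n^'n"]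
    by (simp add: power2_eq_square flip: det_mul)
  moreover have "(det V)\<^sup>2 = v ^ CARD('n)"
    using assms(4) det_scaleR_matrix[of v "mat 1 :: real^'n^'n"]
    by (simp add: power2_eq_square flip: det_mul)
  ultimately show "v = 0" by simp
qed

lemma symmetric_clifford_pair_dependent:
  fixes U W :: "real^'n^'n"
  assumes "odd CARD('n)" and "transpose U = U" and "transpose W = W"
    and U2: "U ** U = u *\<^sub>R mat 1" and W2: "W ** W = w *\<^sub>R mat 1"
    and UW: "U ** W + W ** U = d *\<^sub>R mat 1"
  shows "U = 0 \<or> (\<exists>k. W = k *\<^sub>R U)"
proof (cases "u = 0")
  case True
  then show ?thesis
    using symmetric_square_eq_0_imp_eq_0[OF assms(2)] U2 by simp
next
  case False
  define k where "k = d / (2 * u)"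
  define V where "V = W - k *\<^sub>R U"
  have "U ** V + V ** U = (U ** W + W ** U) - k *\<^sub>R (U ** U) - k *\<^sub>R (U ** U)"
    by (simp add: V_def matrix_mult_linear_simps algebra_simps)
  also have "\<dots> = (d - k * u - k * u) *\<^sub>R mat 1"
    by (simp only: UW U2 scaleR_scaleR scaleR_diff_left)
  also have "\<dots> = 0"
    using False by (simp add: k_def)
  finally have anti: "U ** V = - (V ** U)"
    by (simp add: eq_neg_iff_add_eq_0)
  have "V ** V = W ** W - k *\<^sub>R (U ** W + W ** U) + k\<^sup>2 *\<^sub>R (U ** U)"
    by (simp add: V_def matrix_mult_linear_simps algebra_simps power2_eq_square)
  also have "\<dots> = (w - k * d + k\<^sup>2 * u) *\<^sub>R mat 1"
    by (simp add: W2 UW U2 algebra_simps)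
  finally have "V ** V = 0"
    using odd_dim_anticommuting_scalar_squares[OF assms(1) U2 False _ anti] by simp
  moreover have "transpose V = V"
    by (simp add: V_def transpose_diff transpose_scalar assms(2,3))
  ultimately have "V = 0"
    using symmetric_square_eq_0_imp_eq_0 by blast
  then show ?thesis
    by (auto simp: V_def)
qed

definition outer :: "real^'m \<Rightarrow> real^'n \<Rightarrow> real^'n^'m" where
  "outer u w = (\<chi> i j. u $ i * w $ j)"

lemma outer_scaleR: "outer (r *\<^sub>R u) (r *\<^sub>R u) = r\<^sup>2 *\<^sub>R outer u u"
  by (simp add: vec_eq_iff outer_def power2_eq_square)

lemma outer_mult_outer: "outer u v ** outer v w = (v \<bullet> v) *\<^sub>R outer u w"
  by (simp add: vec_eq_iff outer_def matrix_matrix_mult_def inner_vec_def sum_distrib_left sum_distrib_right algebra_simps)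

lemma transpose_outer_conj:
  "transpose Q ** outer u u ** Q = outer (transpose Q *v u) (transpose Q *v u)"
  by (simp add: vec_eq_iff outer_def matrix_matrix_mult_def matrix_vector_mult_def transpose_def
      sum_distrib_left sum_distrib_right algebra_simps)

lemma outer_normalize:
  fixes m :: "real^'n"
  shows "\<exists>\<mu> v. l *\<^sub>R outer m m = \<mu> *\<^sub>R outer v v \<and> norm v = 1"
proof (cases "m = 0")
  case True
  then show ?thesis
    by (intro exI[of _ 0] exI[of _ "axis undefined 1"]) (simp add: outer_def vec_eq_iff)
next
  case False
  then have "m = norm m *\<^sub>R (m /\<^sub>R norm m)"
    by simp
  then have "outer m m = (norm m)\<^sup>2 *\<^sub>R outer (m /\<^sub>R norm m) (m /\<^sub>R norm m)"
    by (metis outer_scaleR)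
  with False show ?thesis
    by (intro exI[of _ "l * (norm m)\<^sup>2"] exI[of _ "m /\<^sub>R norm m"]) simp
qed

lemma has_multiple_eigenvalue_double_root:
  assumes "has_multiple_eigenvalue A"
  shows "\<exists>c. poly (charpoly A) c = 0 \<and> poly (pderiv (charpoly A)) c = 0"
proof -
  obtain c q where "charpoly A = [:-c, 1:]\<^sup>2 * q"
    using assms unfolding has_multiple_eigenvalue_def by (auto elim: dvdE)
  then show ?thesis
    by (intro exI[of _ c]) (simp add: pderiv_mult pderiv_power)
qed

definition principal_minors_sum :: "real^3^3 \<Rightarrow> real" where
  "principal_minors_sum X =
     X$1$1 * X$2$2 - X$1$2 * X$2$1 + X$1$1 * X$3$3 - X$1$3 * X$3$1 + X$2$2 * X$3$3 - X$2$3 * X$3$2"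

lemma charpoly_3x3: "charpoly (X::real^3^3) = [:- det X, principal_minors_sum X, - trace X, 1:]"
proof -
  have "poly (charpoly X) x = poly [:- det X, principal_minors_sum X, - trace X, 1:] x" for x
    unfolding charpoly_def det_3 principal_minors_sum_def trace_def UNIV_3
    by (simp add: algebra_simps)
  then show ?thesis
    using poly_eq_poly_eq_iff by blast
qed

lemma poly_charpoly_3x3: "poly (charpoly X) c = - det (X - c *\<^sub>R mat 1 :: real^3^3)"
  unfolding charpoly_3x3 det_3 principal_minors_sum_def trace_def UNIV_3
  by (simp add: mat_def algebra_simps)

lemma poly_pderiv_charpoly_3x3:
  "poly (pderiv (charpoly X)) c = principal_minors_sum (X - c *\<^sub>R mat 1 :: real^3^3)"
  unfolding charpoly_3x3 principal_minors_sum_def trace_def UNIV_3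
  by (simp add: pderiv_pCons mat_def algebra_simps)

lemma multiple_eigenvalue_3x3:
  assumes "has_multiple_eigenvalue (X::real^3^3)"
  shows "\<exists>c. det (X - c *\<^sub>R mat 1) = 0 \<and> principal_minors_sum (X - c *\<^sub>R mat 1) = 0"
  using has_multiple_eigenvalue_double_root[OF assms]
  by (simp add: poly_charpoly_3x3 poly_pderiv_charpoly_3x3)

(* a, ..., g are the entries of the symmetric matrix [[a, d, e], [d, b, g], [e, g, f]]. *)
lemma symmetric_3x3_minors_vanish:
  fixes a b f d e g :: real
  assumes "a*b - d\<^sup>2 + a*f - e\<^sup>2 + b*f - g\<^sup>2 = 0"
    and "a*b*f + 2*d*e*g - a*g\<^sup>2 - b*e\<^sup>2 - f*d\<^sup>2 = 0"
  shows "a*b = d\<^sup>2 \<and> a*f = e\<^sup>2 \<and> b*f = g\<^sup>2 \<and> a*g = d*e \<and> d*g = b*e \<and> d*f = e*g"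
proof -
  have "(a*b - d\<^sup>2)\<^sup>2 + (a*f - e\<^sup>2)\<^sup>2 + (b*f - g\<^sup>2)\<^sup>2 + 2*(a*g - d*e)\<^sup>2 + 2*(d*g - b*e)\<^sup>2 + 2*(d*f - e*g)\<^sup>2
     = (a*b - d\<^sup>2 + a*f - e\<^sup>2 + b*f - g\<^sup>2)\<^sup>2 - 2*(a + b + f)*(a*b*f + 2*d*e*g - a*g\<^sup>2 - b*e\<^sup>2 - f*d\<^sup>2)"
    by (simp add: power2_eq_square algebra_simps)
  then have "(a*b - d\<^sup>2)\<^sup>2 + (a*f - e\<^sup>2)\<^sup>2 + (b*f - g\<^sup>2)\<^sup>2 + 2*(a*g - d*e)\<^sup>2 + 2*(d*g - b*e)\<^sup>2 + 2*(d*f - e*g)\<^sup>2 = 0"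
    using assms by simp
  then have "(a*b - d\<^sup>2)\<^sup>2 = 0 \<and> (a*f - e\<^sup>2)\<^sup>2 = 0 \<and> (b*f - g\<^sup>2)\<^sup>2 = 0 \<and> (a*g - d*e)\<^sup>2 = 0 \<and> (d*g - b*e)\<^sup>2 = 0 \<and> (d*f - e*g)\<^sup>2 = 0"
    by (smt (verit) zero_le_power2)
  then show ?thesis
    by simp
qed

lemma symmetric_singular_rank_one:
  fixes Y :: "real^3^3"
  assumes "transpose Y = Y" and "det Y = 0" and "principal_minors_sum Y = 0"
  shows "\<exists>l v. Y = l *\<^sub>R outer v v"
proof -
  obtain a b f d e g where Y: "Y$1$1 = a" "Y$2$2 = b" "Y$3$3 = f" "Y$1$2 = d" "Y$1$3 = e" "Y$2$3 = g"
    "Y$2$1 = d" "Y$3$1 = e" "Y$3$2 = g"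
    using that[of "Y$1$1" "Y$2$2" "Y$3$3" "Y$1$2" "Y$1$3" "Y$2$3"]
    by (simp add: symmetric_matrix_component_swap[OF assms(1)])
  have E2: "a*b - d\<^sup>2 + a*f - e\<^sup>2 + b*f - g\<^sup>2 = 0"
    using assms(3) unfolding principal_minors_sum_def Y by (simp add: power2_eq_square)
  have D: "a*b*f + 2*d*e*g - a*g\<^sup>2 - b*e\<^sup>2 - f*d\<^sup>2 = 0"
    using assms(2) unfolding det_3 Y by (simp add: power2_eq_square algebra_simps)
  have m: "a*b = d\<^sup>2" "a*f = e\<^sup>2" "b*f = g\<^sup>2" "a*g = d*e" "d*g = b*e" "d*f = e*g"
    using symmetric_3x3_minors_vanish[OF E2 D] by auto
  have rank_one: "Y = l *\<^sub>R outer v v" if "\<forall>i j. Y$i$j = l * v$i * v$j" for l v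
    using that by (simp add: vec_eq_iff outer_def)
  consider "a \<noteq> 0" | "a = 0" "b \<noteq> 0" | "a = 0" "b = 0" "f \<noteq> 0" | "a = 0" "b = 0" "f = 0"
    by blast
  then show ?thesis
  proof cases
    case 1
    have "Y = (1/a) *\<^sub>R outer (vector [a, d, e]) (vector [a, d, e])"
      using 1 m Y by (intro rank_one) (simp add: forall_3 field_simps power2_eq_square)
    then show ?thesis by blast
  next
    case 2
    have "Y = (1/b) *\<^sub>R outer (vector [d, b, g]) (vector [d, b, g])"
      using 2 m Y by (intro rank_one) (simp add: forall_3 field_simps power2_eq_square)
    then show ?thesis by blast
  next
    case 3
    have "Y = (1/f) *\<^sub>R outer (vector [e, g, f]) (vector [e, g, f])"
      using 3 m Y by (intro rank_one) (simp add: forall_3 field_simps power2_eq_square)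
    then show ?thesis by blast
  next
    case 4
    have "Y = 0 *\<^sub>R outer 0 0"
      using 4 m Y by (intro rank_one) (simp add: forall_3 field_simps power2_eq_square)
    then show ?thesis by blast
  qed
qed

lemma symmetric_multiple_eigenvalue_rank_one:
  fixes X :: "real^3^3"
  assumes "transpose X = X" and "has_multiple_eigenvalue X"
  shows "\<exists>c \<mu> v. norm v = 1 \<and> X = c *\<^sub>R mat 1 + \<mu> *\<^sub>R outer v v"
proof -
  obtain c where c: "det (X - c *\<^sub>R mat 1) = 0" "principal_minors_sum (X - c *\<^sub>R mat 1) = 0"
    using multiple_eigenvalue_3x3[OF assms(2)] by blast
  have "transpose (X - c *\<^sub>R mat 1) = X - c *\<^sub>R mat 1"
    by (simp add: transpose_diff transpose_scalar assms(1))
  then obtain l m where "X - c *\<^sub>R mat 1 = l *\<^sub>R outer m m"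
    using symmetric_singular_rank_one c by blast
  moreover obtain \<mu> v where "l *\<^sub>R outer m m = \<mu> *\<^sub>R outer v v" "norm v = 1"
    using outer_normalize by blast
  ultimately show ?thesis
    by (metis diff_add_cancel add.commute)
qed

lemma symmetric_multiple_eigenvalue_square:
  fixes X :: "real^3^3"
  assumes "transpose X = X" and "has_multiple_eigenvalue X"
  shows "\<exists>\<alpha> \<beta>. X ** X = \<alpha> *\<^sub>R X + \<beta> *\<^sub>R mat 1"
proof -
  obtain c \<mu> v where v: "norm v = 1" and X: "X = c *\<^sub>R mat 1 + \<mu> *\<^sub>R outer v v"
    using symmetric_multiple_eigenvalue_rank_one[OF assms] by blast
  have "outer v v ** outer v v = outer v v"
    using v by (simp add: outer_mult_outer dot_square_norm)
  then have "X ** X = (2 * c + \<mu>) *\<^sub>R X + (- c\<^sup>2 - c * \<mu>) *\<^sub>R mat 1"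
    unfolding X by (simp add: matrix_mult_linear_simps vec_eq_iff algebra_simps power2_eq_square)
  then show ?thesis by blast
qed

lemma symmetric_multiple_eigenvalue_pencil_diagonalizable:
  fixes X :: "real^3^3"
  assumes "transpose X = X" and "has_multiple_eigenvalue X"
  shows "\<exists>Q. orthogonal_matrix Q \<and>
           (\<forall>p q. diagonal_matrix (transpose Q ** (p *\<^sub>R mat 1 + q *\<^sub>R X) ** Q))"
proof -
  obtain c \<mu> v where v: "norm v = 1" and X: "X = c *\<^sub>R mat 1 + \<mu> *\<^sub>R outer v v"
    using symmetric_multiple_eigenvalue_rank_one[OF assms] by blast
  obtain Q where Q: "orthogonal_matrix Q" "Q *v axis 1 1 = v"
    using orthogonal_matrix_exists_basis[OF v] by blast
  have QQ: "transpose Q ** Q = mat 1"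
    using Q(1) orthogonal_matrix by blast
  have Qv: "v v* Q = axis 1 1"
    using Q(2) QQ by (metis matrix_vector_mul_assoc matrix_vector_mul_lid transpose_matrix_vector)
  have "transpose Q ** (p *\<^sub>R mat 1 + q *\<^sub>R X) ** Q
        = (p + q * c) *\<^sub>R mat 1 + (q * \<mu>) *\<^sub>R outer (axis 1 1) (axis 1 1)" for p q
  proof -
    have "transpose Q ** (p *\<^sub>R mat 1 + q *\<^sub>R X) ** Q
      = (p + q * c) *\<^sub>R (transpose Q ** Q) + (q * \<mu>) *\<^sub>R (transpose Q ** outer v v ** Q)"
      unfolding X by (simp add: matrix_mult_linear_simps algebra_simps)
    then show ?thesis
      by (simp add: QQ transpose_outer_conj Qv)
  qed
  moreover have "diagonal_matrix (r *\<^sub>R mat 1 + s *\<^sub>R outer (axis 1 1) (axis 1 1) :: real^3^3)" for r s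
    unfolding diagonal_matrix_def by (simp add: outer_def mat_def axis_def)
  ultimately show ?thesis
    using Q(1) by auto
qed

lemma three_vectors_independent:
  fixes e u w :: "'a::real_vector"
  assumes "e \<noteq> 0" and "\<nexists>p. u = p *\<^sub>R e" and "\<nexists>p q. w = p *\<^sub>R e + q *\<^sub>R u"
    and "x *\<^sub>R e + y *\<^sub>R u + z *\<^sub>R w = 0"
  shows "x = 0 \<and> y = 0 \<and> z = 0"
proof -
  have "z = 0"
  proof (rule ccontr)
    assume "z \<noteq> 0"
    have "w = inverse z *\<^sub>R (z *\<^sub>R w)"
      using \<open>z \<noteq> 0\<close> by simp
    also have "\<dots> = inverse z *\<^sub>R (- (x *\<^sub>R e + y *\<^sub>R u))"
      using assms(4) by (metis add.commute eq_neg_iff_add_eq_0)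
    also have "\<dots> = (- x / z) *\<^sub>R e + (- y / z) *\<^sub>R u"
      by (simp add: scaleR_add_right scaleR_diff_right divide_inverse mult.commute)
    finally have "w = (- x / z) *\<^sub>R e + (- y / z) *\<^sub>R u" .
    with assms(3) show False by blast
  qed
  moreover have "y = 0"
  proof (rule ccontr)
    assume "y \<noteq> 0"
    have "u = inverse y *\<^sub>R (y *\<^sub>R u)"
      using \<open>y \<noteq> 0\<close> by simp
    also have "\<dots> = inverse y *\<^sub>R (- (x *\<^sub>R e))"
      using assms(4) \<open>z = 0\<close> by (metis add.commute add.right_neutral eq_neg_iff_add_eq_0 scaleR_zero_left)
    also have "\<dots> = (- x / y) *\<^sub>R e"
      by (simp add: divide_inverse mult.commute)
    finally have "u = (- x / y) *\<^sub>R e" .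
    with assms(2) show False by blast
  qed
  ultimately show ?thesis
    using assms(1,4) by simp
qed

lemma pencil_square_relations:
  fixes B1 B2 :: "real^'n^'n"
  assumes indep: "\<And>x y z. x *\<^sub>R mat 1 + y *\<^sub>R B1 + z *\<^sub>R B2 = 0 \<Longrightarrow> x = 0 \<and> y = 0 \<and> z = 0"
    and sq: "\<And>t. (B1 + t *\<^sub>R B2) ** (B1 + t *\<^sub>R B2) = a t *\<^sub>R (B1 + t *\<^sub>R B2) + b t *\<^sub>R mat 1"
  shows "\<exists>c z \<beta>1 \<beta>2 \<gamma>. B1 ** B1 = z *\<^sub>R B1 + \<beta>1 *\<^sub>R mat 1 \<and> B2 ** B2 = c *\<^sub>R B2 + \<beta>2 *\<^sub>R mat 1 \<and>
           B1 ** B2 + B2 ** B1 = c *\<^sub>R B1 + z *\<^sub>R B2 + \<gamma> *\<^sub>R mat 1"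
proof -
  define P J S where "P = B1 ** B1" and "J = B1 ** B2 + B2 ** B1" and "S = B2 ** B2"
  have E: "P $ i $ j + t * J $ i $ j + t\<^sup>2 * S $ i $ j
      = a t * B1 $ i $ j + t * a t * B2 $ i $ j + b t * mat 1 $ i $ j" for t i j
  proof -
    have "P + t *\<^sub>R J + t\<^sup>2 *\<^sub>R S = a t *\<^sub>R B1 + (t * a t) *\<^sub>R B2 + b t *\<^sub>R mat 1"
      using sq[of t] unfolding P_def J_def S_def
      by (simp add: matrix_mult_linear_simps vec_eq_iff algebra_simps power2_eq_square)
    then show ?thesis
      by (simp add: vec_eq_iff)
  qed
  \<comment> \<open>the weights 1, -3, 3, -1 at t = 2, 1, 0, -1 annihilate the quadratic left-hand side\<close>
  have "(b 2 - 3 * b 1 - b (-1) + 3 * b 0) *\<^sub>R mat 1 + (a 2 - 3 * a 1 - a (-1) + 3 * a 0) *\<^sub>R B1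
      + (2 * a 2 - 3 * a 1 + a (-1)) *\<^sub>R B2 = 0"
    unfolding vec_eq_iff
  proof (intro allI)
    fix i j
    show "((b 2 - 3 * b 1 - b (-1) + 3 * b 0) *\<^sub>R mat 1 + (a 2 - 3 * a 1 - a (-1) + 3 * a 0) *\<^sub>R B1
      + (2 * a 2 - 3 * a 1 + a (-1)) *\<^sub>R B2) $ i $ j = (0 :: real^'n^'n) $ i $ j"
      using E[where t=2 and i=i and j=j] E[where t=1 and i=i and j=j]
        E[where t="-1" and i=i and j=j] E[where t=0 and i=i and j=j]
      by (simp add: algebra_simps)
  qed
  then have a_affine: "a (-1) = 2 * a 0 - a 1"
    using indep by fastforce
  define c where "c = a 1 - a 0"
  have "B1 ** B1 = a 0 *\<^sub>R B1 + b 0 *\<^sub>R mat 1"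
    using E[where t=0] by (simp add: vec_eq_iff P_def)
  moreover have "B2 ** B2 = c *\<^sub>R B2 + ((b 1 + b (-1)) / 2 - b 0) *\<^sub>R mat 1"
    unfolding vec_eq_iff
  proof (intro allI)
    fix i j
    show "(B2 ** B2) $ i $ j = (c *\<^sub>R B2 + ((b 1 + b (-1)) / 2 - b 0) *\<^sub>R mat 1) $ i $ j"
      using E[where t=1 and i=i and j=j] E[where t="-1" and i=i and j=j] E[where t=0 and i=i and j=j]
      by (simp add: S_def c_def a_affine field_simps)
  qed
  moreover have "B1 ** B2 + B2 ** B1 = c *\<^sub>R B1 + a 0 *\<^sub>R B2 + ((b 1 - b (-1)) / 2) *\<^sub>R mat 1"
    unfolding vec_eq_iff
  proof (intro allI)
    fix i j
    show "(B1 ** B2 + B2 ** B1) $ i $ j = (c *\<^sub>R B1 + a 0 *\<^sub>R B2 + ((b 1 - b (-1)) / 2) *\<^sub>R mat 1) $ i $ j"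
      using E[where t=1 and i=i and j=j] E[where t="-1" and i=i and j=j] E[where t=0 and i=i and j=j]
      by (simp add: J_def c_def a_affine field_simps)
  qed
  ultimately show ?thesis
    by blast
qed

lemma symmetric_pencil_multiple_eigenvalues_degenerate:
  fixes B1 B2 :: "real^3^3"
  assumes s1: "transpose B1 = B1" and s2: "transpose B2 = B2"
    and mult: "\<And>t. has_multiple_eigenvalue (B1 + t *\<^sub>R B2)"
  shows "(\<exists>p. B1 = p *\<^sub>R mat 1) \<or> (\<exists>p q. B2 = p *\<^sub>R mat 1 + q *\<^sub>R B1)"
proof (rule ccontr)
  assume "\<not> ?thesis"
  then have n1: "\<nexists>p. B1 = p *\<^sub>R mat 1" and n2: "\<nexists>p q. B2 = p *\<^sub>R mat 1 + q *\<^sub>R B1"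
    by auto
  have "\<exists>\<alpha> \<beta>. (B1 + t *\<^sub>R B2) ** (B1 + t *\<^sub>R B2) = \<alpha> *\<^sub>R (B1 + t *\<^sub>R B2) + \<beta> *\<^sub>R mat 1" for t
    using symmetric_multiple_eigenvalue_square[OF _ mult]
    by (simp add: transpose_add transpose_scalar s1 s2)
  then obtain a b where "\<And>t. (B1 + t *\<^sub>R B2) ** (B1 + t *\<^sub>R B2) = a t *\<^sub>R (B1 + t *\<^sub>R B2) + b t *\<^sub>R mat 1"
    by metis
  moreover have "mat 1 \<noteq> (0 :: real^3^3)"
    by (simp add: vec_eq_iff mat_def)
  ultimately obtain c z \<beta>1 \<beta>2 \<gamma> where
    B1sq: "B1 ** B1 = z *\<^sub>R B1 + \<beta>1 *\<^sub>R mat 1" and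
    B2sq: "B2 ** B2 = c *\<^sub>R B2 + \<beta>2 *\<^sub>R mat 1" and
    B12: "B1 ** B2 + B2 ** B1 = c *\<^sub>R B1 + z *\<^sub>R B2 + \<gamma> *\<^sub>R mat 1"
    using pencil_square_relations three_vectors_independent[OF _ n1 n2] by metis
  define U where "U = B1 - (z / 2) *\<^sub>R mat 1"
  define W where "W = B2 - (c / 2) *\<^sub>R mat 1"
  have UU: "U ** U = (\<beta>1 + z\<^sup>2 / 4) *\<^sub>R mat 1"
    unfolding U_def by (simp add: matrix_mult_linear_simps B1sq vec_eq_iff algebra_simps power2_eq_square)
  have WW: "W ** W = (\<beta>2 + c\<^sup>2 / 4) *\<^sub>R mat 1"
    unfolding W_def by (simp add: matrix_mult_linear_simps B2sq vec_eq_iff algebra_simps power2_eq_square)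
  have UW: "U ** W + W ** U = (\<gamma> + z * c / 2) *\<^sub>R mat 1"
  proof -
    have "U ** W + W ** U = (B1 ** B2 + B2 ** B1) - c *\<^sub>R B1 - z *\<^sub>R B2 + (z * c / 2) *\<^sub>R mat 1"
      unfolding U_def W_def by (simp add: matrix_mult_linear_simps vec_eq_iff algebra_simps)
    then show ?thesis
      by (simp add: B12 vec_eq_iff algebra_simps)
  qed
  have sU: "transpose U = U" and sW: "transpose W = W"
    by (simp_all add: U_def W_def transpose_diff transpose_scalar s1 s2)
  have "odd CARD(3)"
    by simp
  from symmetric_clifford_pair_dependent[OF this sU sW UU WW UW] show False
  proof
    assume "U = 0"
    then have "B1 = (z / 2) *\<^sub>R mat 1"
      by (simp add: U_def)
    with n1 show False
      by blast
  next
    assume "\<exists>k. W = k *\<^sub>R U"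
    then obtain k where "B2 = (c / 2 - k * z / 2) *\<^sub>R mat 1 + k *\<^sub>R B1"
      by (auto simp: U_def W_def algebra_simps)
    with n2 show False
      by blast
  qed
qed

theorem lemma4p1:
  fixes B1 B2 :: "real^3^3"
  assumes "symmetric_matrix B1" and "symmetric_matrix B2"
    and "\<forall>t::real. has_multiple_eigenvalue (B1 + t *\<^sub>R B2)"
  shows "\<exists>Q::real^3^3. orthogonal_matrix Q \<and>
           diagonal_matrix (transpose Q ** B1 ** Q) \<and>
           diagonal_matrix (transpose Q ** B2 ** Q)"
proof -
  have s1: "transpose B1 = B1" and s2: "transpose B2 = B2"
    using assms(1,2) unfolding symmetric_matrix_def by auto
  have mult: "\<And>t. has_multiple_eigenvalue (B1 + t *\<^sub>R B2)"
    using assms(3) by blast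
  obtain X p1 q1 p2 q2 where "transpose X = X" "has_multiple_eigenvalue X"
    and "B1 = p1 *\<^sub>R mat 1 + q1 *\<^sub>R X" "B2 = p2 *\<^sub>R mat 1 + q2 *\<^sub>R X"
  proof (cases "\<exists>p. B1 = p *\<^sub>R mat 1")
    case True
    then obtain p where "B1 = p *\<^sub>R mat 1" ..
    then show ?thesis
      using that[of "B1 + B2" p 0 "- p" 1] mult[of 1] by (simp add: transpose_add transpose_scalar s1 s2)
  next
    case False
    then obtain p q where "B2 = p *\<^sub>R mat 1 + q *\<^sub>R B1"
      using symmetric_pencil_multiple_eigenvalues_degenerate[OF s1 s2 mult] by blast
    then show ?thesis
      using that[of B1 0 1 p q] mult[of 0] s1 by simp
  qed
  then show ?thesis
    using symmetric_multiple_eigenvalue_pencil_diagonalizable by metis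
qed

end
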